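(* Let $X$ be a finite simple graph, $\pi\in S_X$, and $\phi\in\{\mathbf{F}^\updownarrow_\pi,\mathbf{F}^\uparrow_\pi,\mathbf{F}^\downarrow_\pi\}$. If for a state $s\in\mathcal{S}$ the transition $s\mapsto\phi(s)$ is unidirectional, then every transition $\phi^t(s)\mapsto\phi^{t+1}(s)$, $t\ge 0$, along the forward orbit of $s$ is unidirectional and in the same direction as that of $s\mapsto\phi(s)$.
   Context: Let $X$ be a finite simple graph with vertices $1,\dots,n$; $d(v)$ is the degree of $v$ and $n[v]$ the closed neighborhood of $v$. An extended vertex state is $s_v=(x_v,k_v)\in\{0,1\}\times\{1,\dots,d(v)+1\}$; $\mathcal{S}$ is the product of these sets. Let $\sigma(x[v])=|\{u\in n[v]:x_u=1\}|$. All vertex functions set $x_v'=1$ iff $\sigma(x[v])\ge k_v$ (else $0$). Increasing ($\uparrow$): $k_v'=k_v+1$ if $x_v=0$ and $\sigma(x[v])\ge k_v$, else $k_v$. Decreasing ($\downarrow$): $k_v'=k_v-1$ if $x_v=1$ and $\sigma(x[v])<k_v$, else $k_v$. Mixed ($\updownarrow$): both of these changes, $k_v$ unchanged otherwise. The local map $F^\star_v$ updates only coordinate $v$; for a permutation $\pi=(\pi_1,\dots,\pi_n)$, $\mathbf{F}^\star_\pi=F^\star_{\pi_n}\circ\cdots\circ F^\star_{\pi_1}$. A transition $(x,k)\mapsto(x',k')$ is unidirectional if either all vertices $v$ with $x_v\ne x'_v$ satisfy $x_v=0,x_v'=1$, or all such vertices satisfy $x_v=1,x_v'=0$. *)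

theory Defs
  imports Main
begin

text \<open>Finite simple graph: finite vertex set V, symmetric irreflexive adjacency E.
  Extended vertex state: x v (True = 1, False = 0) and threshold k v.\<close>

type_synonym 'a xstate = "('a \<Rightarrow> bool) \<times> ('a \<Rightarrow> nat)"

definition simple_graph :: "'a set \<Rightarrow> ('a \<Rightarrow> 'a \<Rightarrow> bool) \<Rightarrow> bool" where
  "simple_graph V E \<longleftrightarrow> finite V \<and> (\<forall>u v. E u v \<longrightarrow> E v u) \<and> (\<forall>v. \<not> E v v)"

definition nbhd :: "'a set \<Rightarrow> ('a \<Rightarrow> 'a \<Rightarrow> bool) \<Rightarrow> 'a \<Rightarrow> 'a set" where
  "nbhd V E v = {u \<in> V. E v u}"

definition closed_nbhd :: "'a set \<Rightarrow> ('a \<Rightarrow> 'a \<Rightarrow> bool) \<Rightarrow> 'a \<Rightarrow> 'a set" where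
  "closed_nbhd V E v = insert v (nbhd V E v)"

definition degree :: "'a set \<Rightarrow> ('a \<Rightarrow> 'a \<Rightarrow> bool) \<Rightarrow> 'a \<Rightarrow> nat" where
  "degree V E v = card (nbhd V E v)"

definition sigma :: "'a set \<Rightarrow> ('a \<Rightarrow> 'a \<Rightarrow> bool) \<Rightarrow> ('a \<Rightarrow> bool) \<Rightarrow> 'a \<Rightarrow> nat" where
  "sigma V E x v = card {u \<in> closed_nbhd V E v. x u}"

text \<open>The state space \<open>\<S>\<close>: x v \<in> {0,1} is automatic, k v \<in> {1..d(v)+1}.\<close>
definition state_space :: "'a set \<Rightarrow> ('a \<Rightarrow> 'a \<Rightarrow> bool) \<Rightarrow> 'a xstate set" where
  "state_space V E = {(x, k). \<forall>v\<in>V. 1 \<le> k v \<and> k v \<le> degree V E v + 1}"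

datatype mode = Increasing | Decreasing | Mixed

definition new_threshold :: "mode \<Rightarrow> bool \<Rightarrow> nat \<Rightarrow> nat \<Rightarrow> nat" where
  "new_threshold m xv sg kv =
     (if (m = Increasing \<or> m = Mixed) \<and> \<not> xv \<and> sg \<ge> kv then kv + 1
      else if (m = Decreasing \<or> m = Mixed) \<and> xv \<and> sg < kv then kv - 1
      else kv)"

definition local_map :: "mode \<Rightarrow> 'a set \<Rightarrow> ('a \<Rightarrow> 'a \<Rightarrow> bool) \<Rightarrow> 'a \<Rightarrow> 'a xstate \<Rightarrow> 'a xstate" where
  "local_map m V E v s =
     (let x = fst s; k = snd s; sg = sigma V E x v in
      (x(v := (sg \<ge> k v)), k(v := new_threshold m (x v) sg (k v))))"

text \<open>Sequential map F_pi = F_{pi_n} o ... o F_{pi_1} (pi_1 applied first).\<close>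
definition seq_map :: "mode \<Rightarrow> 'a set \<Rightarrow> ('a \<Rightarrow> 'a \<Rightarrow> bool) \<Rightarrow> 'a list \<Rightarrow> 'a xstate \<Rightarrow> 'a xstate" where
  "seq_map m V E pi s = fold (local_map m V E) pi s"

definition is_permutation_of :: "'a list \<Rightarrow> 'a set \<Rightarrow> bool" where
  "is_permutation_of pi V \<longleftrightarrow> distinct pi \<and> set pi = V"

definition up_transition :: "'a set \<Rightarrow> 'a xstate \<Rightarrow> 'a xstate \<Rightarrow> bool" where
  "up_transition V s s' \<longleftrightarrow> (\<forall>v\<in>V. fst s v \<noteq> fst s' v \<longrightarrow> \<not> fst s v \<and> fst s' v)"

definition down_transition :: "'a set \<Rightarrow> 'a xstate \<Rightarrow> 'a xstate \<Rightarrow> bool" where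
  "down_transition V s s' \<longleftrightarrow> (\<forall>v\<in>V. fst s v \<noteq> fst s' v \<longrightarrow> fst s v \<and> \<not> fst s' v)"

definition unidirectional :: "'a set \<Rightarrow> 'a xstate \<Rightarrow> 'a xstate \<Rightarrow> bool" where
  "unidirectional V s s' \<longleftrightarrow> up_transition V s s' \<or> down_transition V s s'"

end

theory Submission
  imports Defs
begin

text \<open>Order the activation vectors pointwise (False < True). If one sweep of the
  sequential map only switches vertices on, compare the next sweep from \<open>s\<^sub>1 = \<phi> s\<^sub>0\<close>
  with the previous one from \<open>s\<^sub>0\<close>, vertex by vertex in the order \<open>\<pi>\<close>. Just before
  \<open>v\<close> is updated, the state of the new sweep dominates that of the old one, and at \<open>v\<close>
  it carries exactly the value and threshold the old sweep produced there. Monotonicity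
  of \<open>\<sigma>\<close> then shows that \<open>v\<close> is active after the new update whenever it was after the
  old one: if the old update raised the threshold of \<open>v\<close>, it was because \<open>v\<close> was
  switched on, which in turn makes \<open>\<sigma>\<close> strictly larger. The case of a sweep switching
  vertices only off is dual.\<close>

lemma local_map_other:
  "u \<noteq> v \<Longrightarrow> fst (local_map m V E v s) u = fst s u \<and> snd (local_map m V E v s) u = snd s u"
  by (simp add: local_map_def Let_def)

lemma local_map_self:
  "fst (local_map m V E v s) v = (snd s v \<le> sigma V E (fst s) v)"
  "snd (local_map m V E v s) v = new_threshold m (fst s v) (sigma V E (fst s) v) (snd s v)"
  by (simp_all add: local_map_def Let_def)

lemma fold_local_map_notin:
  "u \<notin> set ws \<Longrightarrow>
   fst (fold (local_map m V E) ws s) u = fst s u \<and> snd (fold (local_map m V E) ws s) u = snd s u"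
  by (induction ws arbitrary: s) (auto simp: local_map_other)

lemma finite_closed_nbhd: "finite V \<Longrightarrow> finite (closed_nbhd V E v)"
  by (simp add: closed_nbhd_def nbhd_def)

lemma sigma_mono: "finite V \<Longrightarrow> x \<le> y \<Longrightarrow> sigma V E x v \<le> sigma V E y v"
  unfolding sigma_def by (rule card_mono) (auto simp: finite_closed_nbhd le_fun_def)

lemma sigma_strict_mono:
  assumes "finite V" "x \<le> y" "\<not> x v" "y v"
  shows "sigma V E x v < sigma V E y v"
proof -
  have "finite {u \<in> closed_nbhd V E v. y u}" using \<open>finite V\<close> by (simp add: finite_closed_nbhd)
  then show ?thesis
    unfolding sigma_def
    by (rule psubset_card_mono) (use assms in \<open>auto simp: le_fun_def closed_nbhd_def\<close>)
qed

lemma new_threshold_le_Suc: "new_threshold m xv sg k \<le> Suc k"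
  by (auto simp: new_threshold_def)

lemma new_threshold_ge_pred: "k - 1 \<le> new_threshold m xv sg k"
  by (auto simp: new_threshold_def)

lemma new_threshold_active: "xv \<Longrightarrow> k \<le> sg \<Longrightarrow> new_threshold m xv sg k = k"
  by (simp add: new_threshold_def)

lemma new_threshold_inactive: "\<not> xv \<Longrightarrow> sg < k \<Longrightarrow> new_threshold m xv sg k = k"
  by (simp add: new_threshold_def)

lemma local_map_self_mono_up:
  assumes "finite V" and le: "fst a \<le> fst b"
    and bx: "fst b v = fst (local_map m V E v a) v"
    and bk: "snd b v = snd (local_map m V E v a) v"
  shows "fst (local_map m V E v a) v \<le> fst (local_map m V E v b) v"
proof -
  let ?sa = "sigma V E (fst a) v" and ?sb = "sigma V E (fst b) v"
  have "snd b v \<le> ?sb" if act: "snd a v \<le> ?sa"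
  proof (cases "fst a v")
    case True
    then have "snd b v = snd a v"
      using act bk by (simp add: local_map_self new_threshold_active)
    then show ?thesis using act sigma_mono[OF \<open>finite V\<close> le, of E v] by simp
  next
    case False
    have "fst b v" using act bx by (simp add: local_map_self)
    then have "?sa < ?sb" using sigma_strict_mono[OF \<open>finite V\<close> le] False by blast
    moreover have "snd b v \<le> Suc (snd a v)"
      using bk new_threshold_le_Suc by (simp add: local_map_self)
    ultimately show ?thesis using act by linarith
  qed
  then show ?thesis by (simp add: local_map_self)
qed

lemma local_map_self_mono_down:
  assumes "finite V" and le: "fst b \<le> fst a"
    and bx: "fst b v = fst (local_map m V E v a) v"
    and bk: "snd b v = snd (local_map m V E v a) v"
  shows "fst (local_map m V E v b) v \<le> fst (local_map m V E v a) v"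
proof -
  let ?sa = "sigma V E (fst a) v" and ?sb = "sigma V E (fst b) v"
  have "snd a v \<le> ?sa" if act: "snd b v \<le> ?sb"
  proof (rule ccontr)
    assume inact: "\<not> snd a v \<le> ?sa"
    have "?sb \<le> ?sa" using sigma_mono[OF \<open>finite V\<close> le] .
    show False
    proof (cases "fst a v")
      case True
      have "\<not> fst b v" using inact bx by (simp add: local_map_self)
      then have "?sb < ?sa" using sigma_strict_mono[OF \<open>finite V\<close> le] True by blast
      moreover have "snd a v - 1 \<le> snd b v"
        using bk new_threshold_ge_pred by (simp add: local_map_self)
      ultimately show False using act inact by linarith
    next
      case False
      then have "snd b v = snd a v"
        using inact bk by (simp add: local_map_self new_threshold_inactive)
      then show False using act inact \<open>?sb \<le> ?sa\<close> by simp
    qed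
  qed
  then show ?thesis by (simp add: local_map_self)
qed

text \<open>Typically \<open>b\<close> is the result of the sweep from \<open>a\<close>, and the lemma compares the
  following sweep with that one.\<close>

lemma fold_local_map_rel:
  assumes "distinct ws"
    and "\<forall>u. R (fst a u) (fst b u)"
    and "\<forall>v\<in>set ws. fst b v = fst (fold (local_map m V E) ws a) v
                  \<and> snd b v = snd (fold (local_map m V E) ws a) v"
    and step: "\<And>a b v. \<forall>u. R (fst a u) (fst b u) \<Longrightarrow>
        fst b v = fst (local_map m V E v a) v \<Longrightarrow> snd b v = snd (local_map m V E v a) v \<Longrightarrow>
        R (fst (local_map m V E v a) v) (fst (local_map m V E v b) v)"
  shows "\<forall>u. R (fst (fold (local_map m V E) ws a) u) (fst (fold (local_map m V E) ws b) u)"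
  using assms(1-3)
proof (induction ws arbitrary: a b)
  case Nil
  then show ?case by simp
next
  case (Cons v ws)
  let ?a' = "local_map m V E v a" and ?b' = "local_map m V E v b"
  have "v \<notin> set ws" using Cons.prems(1) by simp
  then have "fst b v = fst ?a' v" "snd b v = snd ?a' v"
    using Cons.prems(3) fold_local_map_notin[of v ws m V E ?a'] by auto
  then have at_v: "R (fst ?a' v) (fst ?b' v)" using step Cons.prems(2) by blast
  have "\<forall>u. R (fst ?a' u) (fst ?b' u)"
  proof
    fix u show "R (fst ?a' u) (fst ?b' u)"
    proof (cases "u = v")
      case True
      then show ?thesis using at_v by simp
    next
      case False
      then show ?thesis
        using Cons.prems(2) local_map_other[OF False, of m V E a] local_map_other[OF False, of m V E b]
        by simp
    qed
  qed
  moreover have "\<forall>w\<in>set ws. fst ?b' w = fst (fold (local_map m V E) ws ?a') w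
                          \<and> snd ?b' w = snd (fold (local_map m V E) ws ?a') w"
  proof
    fix w assume "w \<in> set ws"
    then have "w \<noteq> v" using \<open>v \<notin> set ws\<close> by auto
    then show "fst ?b' w = fst (fold (local_map m V E) ws ?a') w
             \<and> snd ?b' w = snd (fold (local_map m V E) ws ?a') w"
      using Cons.prems(3) \<open>w \<in> set ws\<close> local_map_other[of w v m V E b] by simp
  qed
  ultimately show ?case using Cons.IH Cons.prems(1) by simp
qed

lemma seq_map_up_preserved:
  assumes "finite V" "distinct pi"
    and "fst s \<le> fst (seq_map m V E pi s)"
  shows "fst (seq_map m V E pi s) \<le> fst (seq_map m V E pi (seq_map m V E pi s))"
proof -
  have "\<forall>u. fst (fold (local_map m V E) pi s) u \<le> fst (fold (local_map m V E) pi (seq_map m V E pi s)) u"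
  proof (rule fold_local_map_rel[where R = "(\<le>)" and a = s, OF \<open>distinct pi\<close>])
    show "\<forall>u. fst s u \<le> fst (seq_map m V E pi s) u" using assms(3) by (simp add: le_fun_def)
  next
    fix a b :: "'a xstate" and v
    assume "\<forall>u. fst a u \<le> fst b u"
    then show "fst b v = fst (local_map m V E v a) v \<Longrightarrow> snd b v = snd (local_map m V E v a) v \<Longrightarrow>
        fst (local_map m V E v a) v \<le> fst (local_map m V E v b) v"
      using local_map_self_mono_up[OF \<open>finite V\<close>] by (simp add: le_fun_def)
  qed (simp add: seq_map_def)
  then show ?thesis by (simp add: seq_map_def le_fun_def)
qed

lemma seq_map_down_preserved:
  assumes "finite V" "distinct pi"
    and "fst (seq_map m V E pi s) \<le> fst s"
  shows "fst (seq_map m V E pi (seq_map m V E pi s)) \<le> fst (seq_map m V E pi s)"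
proof -
  have "\<forall>u. fst (fold (local_map m V E) pi s) u \<ge> fst (fold (local_map m V E) pi (seq_map m V E pi s)) u"
  proof (rule fold_local_map_rel[where R = "(\<ge>)" and a = s, OF \<open>distinct pi\<close>])
    show "\<forall>u. fst s u \<ge> fst (seq_map m V E pi s) u" using assms(3) by (simp add: le_fun_def)
  next
    fix a b :: "'a xstate" and v
    assume "\<forall>u. fst a u \<ge> fst b u"
    then show "fst b v = fst (local_map m V E v a) v \<Longrightarrow> snd b v = snd (local_map m V E v a) v \<Longrightarrow>
        fst (local_map m V E v a) v \<ge> fst (local_map m V E v b) v"
      using local_map_self_mono_down[OF \<open>finite V\<close>] by (simp add: le_fun_def)
  qed (simp add: seq_map_def)
  then show ?thesis by (simp add: seq_map_def le_fun_def)
qed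

lemma funpow_step_invariant:
  assumes "P s (f s)" and "\<And>q. P q (f q) \<Longrightarrow> P (f q) (f (f q))"
  shows "P ((f ^^ t) s) ((f ^^ Suc t) s)"
  by (induction t) (simp_all add: assms)

lemma seq_map_notin: "set pi = V \<Longrightarrow> u \<notin> V \<Longrightarrow> fst (seq_map m V E pi s) u = fst s u"
  using fold_local_map_notin by (metis seq_map_def)

lemma up_transition_seq_map_iff:
  "set pi = V \<Longrightarrow> up_transition V s (seq_map m V E pi s) \<longleftrightarrow> fst s \<le> fst (seq_map m V E pi s)"
  unfolding up_transition_def le_fun_def le_bool_def by (metis seq_map_notin)

lemma down_transition_seq_map_iff:
  "set pi = V \<Longrightarrow> down_transition V s (seq_map m V E pi s) \<longleftrightarrow> fst (seq_map m V E pi s) \<le> fst s"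
  unfolding down_transition_def le_fun_def le_bool_def by (metis seq_map_notin)

theorem proposition3p9:
  fixes V :: "'a set" and E :: "'a \<Rightarrow> 'a \<Rightarrow> bool" and pi :: "'a list"
    and m :: mode and s :: "'a xstate"
  assumes "simple_graph V E"
    and "is_permutation_of pi V"
    and "s \<in> state_space V E"
    and "unidirectional V s (seq_map m V E pi s)"
  shows "(up_transition V s (seq_map m V E pi s) \<longrightarrow>
            (\<forall>t. up_transition V ((seq_map m V E pi ^^ t) s) ((seq_map m V E pi ^^ Suc t) s)))
       \<and> (down_transition V s (seq_map m V E pi s) \<longrightarrow>
            (\<forall>t. down_transition V ((seq_map m V E pi ^^ t) s) ((seq_map m V E pi ^^ Suc t) s)))"
proof -
  let ?F = "seq_map m V E pi"
  have fin: "finite V" using assms(1) by (simp add: simple_graph_def)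
  have dist: "distinct pi" and V: "set pi = V"
    using assms(2) by (auto simp: is_permutation_of_def)
  have "fst ((?F ^^ t) s) \<le> fst ((?F ^^ Suc t) s)" if "fst s \<le> fst (?F s)" for t
    using funpow_step_invariant[where P = "\<lambda>p q. fst p \<le> fst q"] that
      seq_map_up_preserved[OF fin dist] by blast
  moreover have "fst ((?F ^^ Suc t) s) \<le> fst ((?F ^^ t) s)" if "fst (?F s) \<le> fst s" for t
    using funpow_step_invariant[where P = "\<lambda>p q. fst q \<le> fst p"] that
      seq_map_down_preserved[OF fin dist] by blast
  ultimately show ?thesis
    using up_transition_seq_map_iff[OF V] down_transition_seq_map_iff[OF V] by simp
qed

end
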